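(* Let $G=(V,E)$ be a connected, simple, undirected, unweighted graph and $S\subseteq V$ with $|S|\ge2$. For $u\in V$ let $\deg_S(u)$ be the number of neighbors of $u$ in $S$, and define the $V\times V$ matrix $R$ by $R[u,v]=1$ if $u=v$ and $\deg_S(u)=0$; $R[u,v]=1/\deg_S(u)$ if $\{u,v\}\in E$ and $v\in S$; and $R[u,v]=0$ otherwise. Let $\mathbf{Q}$ be the transition matrix of $\textsc{ShortCut}(G,S)$ and $\mathbf{S}$ that of $\textsc{Schur}(G,S)$. Then for all $u\in S$, $(\mathbf{Q}R)[u,u]<1$, and for all $u\neq v$ in $S$, $$\mathbf{S}[u,v]=\frac{(\mathbf{Q}R)[u,v]}{1-(\mathbf{Q}R)[u,u]},$$ where $(\mathbf{Q}R)[u,u]$ equals the probability that a simple random walk on $G$ started at $u$ returns to $u$ before visiting any other vertex of $S$.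
   Context: The shortcut graph: for $u\in V$, let $x_0=u,x_1,\dots$ be a simple random walk on $G$ and $j=\min\{i>0:x_i\in S\}$; $\mathbf{Q}[u,v]=\Pr[x_{j-1}=v]$. The Schur complement transition matrix: for $u\ne v\in S$, $\mathbf{S}[u,v]$ is the probability that $v$ is the first vertex of $S\setminus\{u\}$ visited by a simple random walk on $G$ started at $u$, and $\mathbf{S}[u,u]=0$. *)

theory Defs
  imports "HOL-Analysis.Analysis"
begin

definition simple_connected_graph :: "'a set \<Rightarrow> ('a \<Rightarrow> 'a \<Rightarrow> bool) \<Rightarrow> bool" where
  "simple_connected_graph V E \<longleftrightarrow>
     finite V \<and> (\<forall>x y. E x y \<longrightarrow> x \<in> V \<and> y \<in> V) \<and>
     (\<forall>x y. E x y \<longrightarrow> E y x) \<and> (\<forall>x. \<not> E x x) \<and>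
     (\<forall>x\<in>V. \<forall>y\<in>V. E\<^sup>*\<^sup>* x y)"

definition deg :: "'a set \<Rightarrow> ('a \<Rightarrow> 'a \<Rightarrow> bool) \<Rightarrow> 'a \<Rightarrow> nat" where
  "deg V E x = card {y \<in> V. E x y}"

definition degS :: "('a \<Rightarrow> 'a \<Rightarrow> bool) \<Rightarrow> 'a set \<Rightarrow> 'a \<Rightarrow> nat" where
  "degS E S x = card {y \<in> S. E x y}"

definition trans_prob :: "'a set \<Rightarrow> ('a \<Rightarrow> 'a \<Rightarrow> bool) \<Rightarrow> 'a \<Rightarrow> 'a \<Rightarrow> real" where
  "trans_prob V E x y = (if E x y then 1 / real (deg V E x) else 0)"

text \<open>probability that the simple random walk started at hd xs follows the
finite trajectory xs (i.e. the probability of the corresponding cylinder event)\<close>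
fun walk_prob :: "'a set \<Rightarrow> ('a \<Rightarrow> 'a \<Rightarrow> bool) \<Rightarrow> 'a list \<Rightarrow> real" where
  "walk_prob V E (x # y # xs) = trans_prob V E x y * walk_prob V E (y # xs)"
| "walk_prob V E _ = 1"

text \<open>Probability of the event described by a set A of finite trajectories
(pairwise non-prefix, i.e. describing a disjoint union of cylinder events),
for the random walk started at u.\<close>
definition event_prob :: "'a set \<Rightarrow> ('a \<Rightarrow> 'a \<Rightarrow> bool) \<Rightarrow> 'a list set \<Rightarrow> real" where
  "event_prob V E A = (\<Sum>\<^sub>\<infinity> xs \<in> A. walk_prob V E xs)"

definition first_entry_paths :: "'a set \<Rightarrow> 'a set \<Rightarrow> 'a \<Rightarrow> 'a list set" where
  "first_entry_paths V T u =
     {xs. length xs \<ge> 2 \<and> set xs \<subseteq> V \<and> hd xs = u \<and> last xs \<in> T \<and>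
          (\<forall>i. 0 < i \<and> i < length xs - 1 \<longrightarrow> xs ! i \<notin> T)}"

text \<open>Transition matrix of ShortCut(G,S): Q[u,v] = Pr[x_{j-1} = v],
j = min {i > 0. x_i \<in> S}.\<close>
definition shortcut_Q :: "'a set \<Rightarrow> ('a \<Rightarrow> 'a \<Rightarrow> bool) \<Rightarrow> 'a set \<Rightarrow> 'a \<Rightarrow> 'a \<Rightarrow> real" where
  "shortcut_Q V E S u v =
     event_prob V E {xs \<in> first_entry_paths V S u. xs ! (length xs - 2) = v}"

definition schur_S :: "'a set \<Rightarrow> ('a \<Rightarrow> 'a \<Rightarrow> bool) \<Rightarrow> 'a set \<Rightarrow> 'a \<Rightarrow> 'a \<Rightarrow> real" where
  "schur_S V E S u v =
     (if u = v then 0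
      else event_prob V E {xs \<in> first_entry_paths V (S - {u}) u. last xs = v})"

definition R_mat :: "('a \<Rightarrow> 'a \<Rightarrow> bool) \<Rightarrow> 'a set \<Rightarrow> 'a \<Rightarrow> 'a \<Rightarrow> real" where
  "R_mat E S u v =
     (if u = v \<and> degS E S u = 0 then 1
      else if E u v \<and> v \<in> S then 1 / real (degS E S u)
      else 0)"

definition mat_mult :: "'a set \<Rightarrow> ('a \<Rightarrow> 'a \<Rightarrow> real) \<Rightarrow> ('a \<Rightarrow> 'a \<Rightarrow> real) \<Rightarrow> 'a \<Rightarrow> 'a \<Rightarrow> real" where
  "mat_mult V A B u v = (\<Sum>w\<in>V. A u w * B w v)"

end

theory Submission
  imports Defs
begin

text \<open>Write a first-entry trajectory from u to S as u, m, w, y with m avoiding S. Its weight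
  is the weight of u, m, w times P(w, y); summing over y \<in> S produces the factor
  deg_S(w)/deg(w), which R cancels, so the last step becomes the step w \<rightarrow> v. Hence (QR)[u,v]
  is the probability p_v that the walk from u first enters S at v. A trajectory from u that
  avoids S - {u} until it hits v either avoids u as well, or splits at its first return to u
  into a first-entry trajectory ending at u followed by a trajectory of the same kind; hence
  Schur[u,v] = p_v + p_u Schur[u,v]. Connectivity yields a trajectory of positive weight from u
  that first enters S at another vertex, so p_u < 1. The infinite sums may be rearranged freely
  because the first-entry trajectories from a vertex have total weight at most 1.\<close>

lemma walk_prob_nonneg: "walk_prob V E xs \<ge> 0"
  by (induction V E xs rule: walk_prob.induct) (auto simp: trans_prob_def)

lemma walk_prob_append:
  "walk_prob V E (xs @ y # ys) = walk_prob V E (xs @ [y]) * walk_prob V E (y # ys)"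
  by (induction xs rule: induct_list012) auto

lemma walk_prob_snoc:
  "xs \<noteq> [] \<Longrightarrow> walk_prob V E (xs @ [y]) = walk_prob V E xs * trans_prob V E (last xs) y"
  by (induction xs rule: induct_list012) auto

lemma first_entry_paths_iff:
  "xs \<in> first_entry_paths V T u \<longleftrightarrow>
     (\<exists>m v. xs = u # m @ [v] \<and> u \<in> V \<and> m \<in> lists (V - T) \<and> v \<in> V \<inter> T)"
proof
  assume xs: "xs \<in> first_entry_paths V T u"
  then have "length xs \<ge> 2" and "hd xs = u"
    unfolding first_entry_paths_def by auto
  then obtain ys where "xs = u # ys" "ys \<noteq> []"
    by (cases xs) force+
  then obtain m v where xs_eq: "xs = u # m @ [v]"
    by (metis append_butlast_last_id)
  have "m ! k \<notin> T" if "k < length m" for k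
    using xs that unfolding first_entry_paths_def xs_eq
    by (auto dest!: spec[of _ "Suc k"] simp: nth_append)
  then have "m \<in> lists (V - T)"
    using xs unfolding first_entry_paths_def xs_eq by (auto simp: in_set_conv_nth)
  with xs show "\<exists>m v. xs = u # m @ [v] \<and> u \<in> V \<and> m \<in> lists (V - T) \<and> v \<in> V \<inter> T"
    unfolding first_entry_paths_def xs_eq by auto
next
  assume "\<exists>m v. xs = u # m @ [v] \<and> u \<in> V \<and> m \<in> lists (V - T) \<and> v \<in> V \<inter> T"
  then obtain m v where "xs = u # m @ [v]" "u \<in> V" "m \<in> lists (V - T)" "v \<in> V \<inter> T"
    by blast
  then show "xs \<in> first_entry_paths V T u"
    unfolding first_entry_paths_def
    by (auto simp: nth_append nth_Cons' dest!: nth_mem[of "_ - 1" m])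
qed

lemma first_entry_paths_ending_at:
  assumes "u \<in> V" and "v \<in> V \<inter> T"
  shows "{xs \<in> first_entry_paths V T u. last xs = v} = (\<lambda>m. u # m @ [v]) ` lists (V - T)"
  using assms by (auto simp: first_entry_paths_iff)

lemma nth_penultimate: "(u # m @ [y]) ! length m = last (u # m)"
  by (induction m arbitrary: u) (auto simp: nth_append)

lemma first_entry_paths_with_penultimate:
  assumes "u \<in> V" and "S \<subseteq> V"
  shows "{xs \<in> first_entry_paths V S u. xs ! (length xs - 2) = w} =
           (\<lambda>(m, y). u # m @ [y]) ` ({m \<in> lists (V - S). last (u # m) = w} \<times> S)"
  using assms by (fastforce simp: first_entry_paths_iff nth_penultimate)

lemma lists_length_le_Suc:
  "{m. set m \<subseteq> A \<and> length m \<le> Suc n} =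
     insert [] ((\<lambda>(y, m). y # m) ` (A \<times> {m. set m \<subseteq> A \<and> length m \<le> n}))"
proof (rule set_eqI)
  fix m :: "'a list"
  show "m \<in> {m. set m \<subseteq> A \<and> length m \<le> Suc n} \<longleftrightarrow>
          m \<in> insert [] ((\<lambda>(y, m). y # m) ` (A \<times> {m. set m \<subseteq> A \<and> length m \<le> n}))"
    by (cases m) auto
qed

lemma sum_trans_prob_mult_R_mat:
  assumes "finite S" and "v \<in> S"
  shows "(\<Sum>y\<in>S. trans_prob V E w y) * R_mat E S w v = trans_prob V E w v"
proof -
  have sum_eq: "(\<Sum>y\<in>S. trans_prob V E w y) = real (degS E S w) / real (deg V E w)"
    unfolding trans_prob_def degS_def by (simp add: sum.inter_filter[OF assms(1), symmetric])
  show ?thesis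
  proof (cases "E w v")
    case True
    with assms have "degS E S w > 0"
      unfolding degS_def by (auto simp: card_gt_0_iff)
    with True assms(2) show ?thesis
      unfolding sum_eq R_mat_def by (auto simp: trans_prob_def)
  qed (unfold sum_eq R_mat_def, auto simp: trans_prob_def)
qed

lemma event_prob_first_entry_ending_at:
  assumes "u \<in> V" and "v \<in> V \<inter> T"
  shows "event_prob V E {xs \<in> first_entry_paths V T u. last xs = v} =
           infsum (\<lambda>m. walk_prob V E (u # m @ [v])) (lists (V - T))"
proof -
  have "inj_on (\<lambda>m. u # m @ [v]) (lists (V - T))"
    by (auto simp: inj_on_def)
  then show ?thesis
    unfolding event_prob_def first_entry_paths_ending_at[OF assms]
    by (simp add: infsum_reindex o_def)
qed

lemma append_Cons_eq_split_first:
  "u \<notin> set a \<Longrightarrow> u \<notin> set a' \<Longrightarrow> a @ u # b = a' @ u # b' \<Longrightarrow> a = a' \<and> b = b'"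
proof (induction a arbitrary: a')
  case Nil
  then show ?case by (cases a') auto
next
  case (Cons x a)
  then show ?case by (cases a') auto
qed

lemma inj_on_split_first: "inj_on (\<lambda>(a, b). a @ u # b) (lists (- {u}) \<times> UNIV)"
  by (rule inj_onI) (auto dest: append_Cons_eq_split_first)

lemma lists_split_first:
  assumes "u \<in> V" and "u \<in> S"
  shows "lists (V - (S - {u})) =
           lists (V - S) \<union> (\<lambda>(a, b). a @ u # b) ` (lists (V - S) \<times> lists (V - (S - {u})))"
proof (intro set_eqI iffI)
  fix m
  assume m: "m \<in> lists (V - (S - {u}))"
  show "m \<in> lists (V - S) \<union> (\<lambda>(a, b). a @ u # b) ` (lists (V - S) \<times> lists (V - (S - {u})))"
  proof (cases "u \<in> set m")
    case True
    then obtain a b where "m = a @ u # b" and "u \<notin> set a"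
      by (metis split_list_first)
    with m show ?thesis
      by auto
  qed (use m in auto)
qed (use assms in auto)

lemma first_entry_walk_exists:
  assumes "E\<^sup>*\<^sup>* a b" and "b \<in> T" and "a \<notin> T"
  shows "\<exists>m t. successively E (a # m @ [t]) \<and> set m \<inter> T = {} \<and> t \<in> T"
  using assms
proof (induction rule: converse_rtranclp_induct)
  case (step a c)
  show ?case
  proof (cases "c \<in> T")
    case True
    with step.hyps(1) show ?thesis
      by (intro exI[of _ "[]"] exI[of _ c]) auto
  next
    case False
    then obtain m t where "successively E (c # m @ [t])" "set m \<inter> T = {}" "t \<in> T"
      using step by blast
    with False step.hyps(1) show ?thesis
      by (intro exI[of _ "c # m"] exI[of _ t]) auto
  qed
qed simp

lemma successively_set_subset:
  assumes "\<And>x y. E x y \<Longrightarrow> y \<in> V" and "successively E (x # xs)"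
  shows "set xs \<subseteq> V"
  using assms(2) by (induction xs arbitrary: x) (auto dest: assms(1))

context
  fixes V :: "'a set" and E :: "'a \<Rightarrow> 'a \<Rightarrow> bool"
  assumes finite_V: "finite V"
begin

lemma sum_trans_prob_le_1:
  assumes "Y \<subseteq> V"
  shows "(\<Sum>y\<in>Y. trans_prob V E x y) \<le> 1"
proof -
  have "(\<Sum>y\<in>Y. trans_prob V E x y) \<le> (\<Sum>y\<in>V. trans_prob V E x y)"
    by (rule sum_mono2[OF finite_V assms]) (simp add: trans_prob_def)
  also have "\<dots> = real (deg V E x) * (1 / real (deg V E x))"
    unfolding trans_prob_def deg_def by (simp add: sum.inter_filter[OF finite_V, symmetric])
  also have "\<dots> \<le> 1"
    by simp
  finally show ?thesis .
qed

lemma sum_first_entry_length_le_1: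
  "(\<Sum>m | set m \<subseteq> V - T \<and> length m \<le> n. \<Sum>v\<in>V \<inter> T. walk_prob V E (x # m @ [v])) \<le> 1"
proof (induction n arbitrary: x)
  case 0
  have "{m. set m \<subseteq> V - T \<and> length m \<le> 0} = {[]}"
    by auto
  then show ?case
    using sum_trans_prob_le_1[of "V \<inter> T" x] by simp
next
  case (Suc n)
  let ?L = "{m. set m \<subseteq> V - T \<and> length m \<le> n}"
  let ?f = "\<lambda>x m. \<Sum>v\<in>V \<inter> T. walk_prob V E (x # m @ [v])"
  have fin: "finite ((V - T) \<times> ?L)"
    using finite_V by (simp add: finite_lists_length_le)
  have "sum (?f x) {m. set m \<subseteq> V - T \<and> length m \<le> Suc n}
          = ?f x [] + (\<Sum>(y, m)\<in>(V - T) \<times> ?L. ?f x (y # m))"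
    unfolding lists_length_le_Suc using fin
    by (subst sum.insert) (auto simp: sum.reindex inj_on_def split_def)
  also have "(\<Sum>(y, m)\<in>(V - T) \<times> ?L. ?f x (y # m)) =
               (\<Sum>y\<in>V - T. trans_prob V E x y * sum (?f y) ?L)"
    by (simp add: sum.cartesian_product[symmetric] sum_distrib_left)
  also have "\<dots> \<le> (\<Sum>y\<in>V - T. trans_prob V E x y)"
    by (intro sum_mono mult_left_le Suc.IH) (simp add: trans_prob_def)
  also have "?f x [] = (\<Sum>y\<in>V \<inter> T. trans_prob V E x y)"
    by simp
  also have "(\<Sum>y\<in>V \<inter> T. trans_prob V E x y) + (\<Sum>y\<in>V - T. trans_prob V E x y) =
               (\<Sum>y\<in>V. trans_prob V E x y)"
    by (rule sum.Int_Diff[OF finite_V, symmetric])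
  also have "\<dots> \<le> 1"
    by (rule sum_trans_prob_le_1) simp
  finally show ?case
    by simp
qed

lemma sum_first_entry_paths_le_1:
  assumes "finite F" and "F \<subseteq> first_entry_paths V T x"
  shows "sum (walk_prob V E) F \<le> 1"
proof -
  define n where "n = Max (length ` F)"
  let ?L = "{m. set m \<subseteq> V - T \<and> length m \<le> n}"
  have "length xs \<le> n" if "xs \<in> F" for xs
    unfolding n_def using assms(1) that by simp
  with assms(2) have "F \<subseteq> (\<lambda>(m, v). x # m @ [v]) ` (?L \<times> (V \<inter> T))"
    by (fastforce simp: first_entry_paths_iff)
  then have "sum (walk_prob V E) F \<le> sum (walk_prob V E) ((\<lambda>(m, v). x # m @ [v]) ` (?L \<times> (V \<inter> T)))"
    using finite_V by (intro sum_mono2) (auto simp: walk_prob_nonneg finite_lists_length_le)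
  also have "\<dots> = (\<Sum>m\<in>?L. \<Sum>v\<in>V \<inter> T. walk_prob V E (x # m @ [v]))"
    by (simp add: sum.reindex inj_on_def sum.cartesian_product split_def)
  also have "\<dots> \<le> 1"
    by (rule sum_first_entry_length_le_1)
  finally show ?thesis .
qed

lemma summable_on_first_entry_paths:
  "walk_prob V E summable_on first_entry_paths V T x"
  by (rule nonneg_bdd_above_summable_on)
     (use walk_prob_nonneg sum_first_entry_paths_le_1 in \<open>auto intro!: bdd_aboveI2\<close>)

lemma event_prob_first_entry_paths_le_1:
  "event_prob V E (first_entry_paths V T x) \<le> 1"
  unfolding event_prob_def
  by (rule infsum_le_finite_sums[OF summable_on_first_entry_paths])
     (rule sum_first_entry_paths_le_1)

lemma summable_on_first_entry_subset:
  "A \<subseteq> first_entry_paths V T x \<Longrightarrow> walk_prob V E summable_on A"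
  by (rule summable_on_subset[OF summable_on_first_entry_paths])

lemma summable_on_first_entry_ending_at:
  assumes "u \<in> V" and "v \<in> V \<inter> T"
  shows "(\<lambda>m. walk_prob V E (u # m @ [v])) summable_on lists (V - T)"
proof -
  have "walk_prob V E summable_on (\<lambda>m. u # m @ [v]) ` lists (V - T)"
    by (rule summable_on_first_entry_subset) (use first_entry_paths_ending_at[OF assms] in blast)
  moreover have "inj_on (\<lambda>m. u # m @ [v]) (lists (V - T))"
    by (auto simp: inj_on_def)
  ultimately show ?thesis
    by (simp add: summable_on_reindex o_def)
qed

lemma shortcut_Q_factor:
  assumes "u \<in> V" and "S \<subseteq> V"
  shows "shortcut_Q V E S u w =
           infsum (\<lambda>m. walk_prob V E (u # m)) {m \<in> lists (V - S). last (u # m) = w} *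
           (\<Sum>y\<in>S. trans_prob V E w y)"
proof -
  let ?P = "{m \<in> lists (V - S). last (u # m) = w}"
  let ?h = "\<lambda>(m, y). u # m @ [y]"
  let ?f = "\<lambda>(m, y). walk_prob V E (u # m) * trans_prob V E w y"
  have finite_S: "finite S"
    using assms(2) finite_V finite_subset by blast
  have inj: "inj_on ?h (?P \<times> S)"
    by (auto simp: inj_on_def)
  have walk_h: "(walk_prob V E \<circ> ?h) p = ?f p" if "p \<in> ?P \<times> S" for p
    using that walk_prob_snoc[of "u # _" V E] by auto
  have "walk_prob V E summable_on ?h ` (?P \<times> S)"
    by (rule summable_on_first_entry_subset) (use first_entry_paths_with_penultimate[OF assms] in blast)
  with inj have summable: "?f summable_on ?P \<times> S"
    by (simp add: summable_on_reindex summable_on_cong[OF walk_h])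
  have "shortcut_Q V E S u w = infsum ?f (?P \<times> S)"
    unfolding shortcut_Q_def event_prob_def first_entry_paths_with_penultimate[OF assms]
    using inj by (simp add: infsum_reindex infsum_cong[OF walk_h])
  also have "\<dots> = infsum (\<lambda>m. \<Sum>y\<in>S. walk_prob V E (u # m) * trans_prob V E w y) ?P"
    using infsum_Sigma'_banach[OF summable] finite_S by simp
  also have "\<dots> = infsum (\<lambda>m. walk_prob V E (u # m)) ?P * (\<Sum>y\<in>S. trans_prob V E w y)"
    by (simp add: sum_distrib_left[symmetric] infsum_cmult_left')
  finally show ?thesis .
qed

lemma shortcut_R_product:
  assumes "S \<subseteq> V" and "u \<in> S" and "v \<in> S"
  shows "mat_mult V (shortcut_Q V E S) (R_mat E S) u v =
           event_prob V E {xs \<in> first_entry_paths V S u. last xs = v}"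
proof -
  define P where "P w = {m \<in> lists (V - S). last (u # m) = w}" for w
  let ?g = "\<lambda>m. walk_prob V E (u # m @ [v])"
  have u: "u \<in> V" and v: "v \<in> V \<inter> S"
    using assms by auto
  have finite_S: "finite S"
    using assms(1) finite_V finite_subset by blast
  have "shortcut_Q V E S u w * R_mat E S w v = infsum ?g (P w)" for w
  proof -
    have "shortcut_Q V E S u w * R_mat E S w v =
            infsum (\<lambda>m. walk_prob V E (u # m)) (P w) * trans_prob V E w v"
      unfolding shortcut_Q_factor[OF u assms(1)] P_def
      using sum_trans_prob_mult_R_mat[OF finite_S assms(3)] by (simp add: mult.assoc)
    also have "\<dots> = infsum (\<lambda>m. walk_prob V E (u # m) * trans_prob V E w v) (P w)"
      by (rule infsum_cmult_left'[symmetric])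
    also have "\<dots> = infsum ?g (P w)"
      by (rule infsum_cong) (use walk_prob_snoc[of "u # _" V E] in \<open>auto simp: P_def\<close>)
    finally show ?thesis .
  qed
  then have "mat_mult V (shortcut_Q V E S) (R_mat E S) u v = (\<Sum>w\<in>V. infsum ?g (P w))"
    by (simp add: mat_mult_def)
  also have "\<dots> = infsum ?g (\<Union>w\<in>V. P w)"
    using summable_on_first_entry_ending_at[OF u v]
    by (intro sum_infsum[OF finite_V]) (auto simp: P_def intro: summable_on_subset)
  also have "(\<Union>w\<in>V. P w) = lists (V - S)"
  proof -
    have "last (u # m) \<in> V" if "m \<in> lists (V - S)" for m
      using that u by (cases m rule: rev_cases) auto
    then show ?thesis
      unfolding P_def by blast
  qed
  finally show ?thesis
    using event_prob_first_entry_ending_at[OF u v] by simp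
qed

lemma schur_S_renewal:
  assumes "S \<subseteq> V" and "u \<in> S" and "v \<in> S" and "u \<noteq> v"
  shows "schur_S V E S u v =
           event_prob V E {xs \<in> first_entry_paths V S u. last xs = v} +
           event_prob V E {xs \<in> first_entry_paths V S u. last xs = u} * schur_S V E S u v"
proof -
  have u: "u \<in> V" and v: "v \<in> V \<inter> (S - {u})"
    using assms by auto
  let ?g = "\<lambda>m. walk_prob V E (u # m @ [v])"
  let ?f = "\<lambda>m. walk_prob V E (u # m @ [u])"
  let ?J = "\<lambda>(a, b). a @ u # b"
  let ?A = "lists (V - S)" and ?B = "lists (V - (S - {u}))"
  define d where "d = infsum ?g ?B"
  have schur: "schur_S V E S u v = d"
    unfolding schur_S_def d_def using assms(4) event_prob_first_entry_ending_at[OF u v] by simp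
  have pv: "event_prob V E {xs \<in> first_entry_paths V S u. last xs = v} = infsum ?g ?A"
    using assms by (intro event_prob_first_entry_ending_at) auto
  have pu: "event_prob V E {xs \<in> first_entry_paths V S u. last xs = u} = infsum ?f ?A"
    using assms by (intro event_prob_first_entry_ending_at) auto
  have inj: "inj_on ?J (?A \<times> ?B)"
    by (rule inj_on_subset[OF inj_on_split_first]) (use assms(2) in auto)
  have walk_J: "(?g \<circ> ?J) p = (\<lambda>(a, b). ?f a * ?g b) p" for p
    using walk_prob_append[of V E "u # fst p" u "snd p @ [v]"] by (simp add: split_def)
  have summable: "?g summable_on ?B"
    by (rule summable_on_first_entry_ending_at[OF u v])
  have summable_A: "?g summable_on ?A"
    by (rule summable_on_subset[OF summable]) auto
  have summable_image: "?g summable_on ?J ` (?A \<times> ?B)"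
    by (rule summable_on_subset[OF summable]) (use lists_split_first[OF u assms(2)] in blast)
  with inj have summable_J: "(\<lambda>(a, b). ?f a * ?g b) summable_on ?A \<times> ?B"
    by (simp add: summable_on_reindex walk_J[abs_def])
  have "?A \<inter> ?J ` (?A \<times> ?B) = {}"
    using assms(2) by force
  then have split: "d = infsum ?g ?A + infsum ?g (?J ` (?A \<times> ?B))"
    unfolding d_def by (subst lists_split_first[OF u assms(2)])
      (rule infsum_Un_disjoint[OF summable_A summable_image])
  have "infsum ?g (?J ` (?A \<times> ?B)) = infsum (\<lambda>(a, b). ?f a * ?g b) (?A \<times> ?B)"
    using inj by (simp add: infsum_reindex walk_J[abs_def])
  also have "\<dots> = infsum (\<lambda>a. infsum (\<lambda>b. ?f a * ?g b) ?B) ?A"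
    using infsum_Sigma'_banach[OF summable_J] by simp
  also have "\<dots> = infsum ?f ?A * d"
    unfolding d_def by (simp add: infsum_cmult_right' infsum_cmult_left')
  finally show ?thesis
    unfolding schur pv pu using split by simp
qed

lemma walk_prob_pos:
  assumes "set xs \<subseteq> V" and "successively E xs"
  shows "walk_prob V E xs > 0"
  using assms
proof (induction xs rule: induct_list012)
  case (3 x y zs)
  then have "y \<in> {z \<in> V. E x z}"
    by auto
  then have "deg V E x > 0"
    unfolding deg_def using finite_V by (auto simp: card_gt_0_iff)
  with 3 show ?case
    by (simp add: trans_prob_def)
qed auto

lemma event_prob_ending_at_pos:
  assumes "xs \<in> first_entry_paths V T u" and "walk_prob V E xs > 0"
  shows "event_prob V E {ys \<in> first_entry_paths V T u. last ys = last xs} > 0"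
proof -
  have "walk_prob V E xs = infsum (walk_prob V E) {xs}"
    by simp
  also have "\<dots> \<le> event_prob V E {ys \<in> first_entry_paths V T u. last ys = last xs}"
    unfolding event_prob_def using assms(1)
    by (intro infsum_mono2 summable_on_first_entry_subset) (auto simp: walk_prob_nonneg)
  finally show ?thesis
    using assms(2) by simp
qed

lemma event_prob_ending_at_add_le_1:
  assumes "v \<noteq> w"
  shows "event_prob V E {xs \<in> first_entry_paths V T u. last xs = v} +
           event_prob V E {xs \<in> first_entry_paths V T u. last xs = w} \<le> 1"
proof -
  let ?Ev = "{xs \<in> first_entry_paths V T u. last xs = v}"
  let ?Ew = "{xs \<in> first_entry_paths V T u. last xs = w}"
  have "event_prob V E ?Ev + event_prob V E ?Ew = event_prob V E (?Ev \<union> ?Ew)"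
    unfolding event_prob_def using assms
    by (intro infsum_Un_disjoint[symmetric] summable_on_first_entry_subset) auto
  also have "\<dots> \<le> event_prob V E (first_entry_paths V T u)"
    unfolding event_prob_def
    by (intro infsum_mono2 summable_on_first_entry_subset summable_on_first_entry_paths)
       (auto simp: walk_prob_nonneg)
  also have "\<dots> \<le> 1"
    by (rule event_prob_first_entry_paths_le_1)
  finally show ?thesis .
qed

end

lemma return_prob_lt_1:
  assumes G: "simple_connected_graph V E"
    and "S \<subseteq> V" and "u \<in> S" and "v \<in> S" and "u \<noteq> v"
  shows "event_prob V E {xs \<in> first_entry_paths V S u. last xs = u} < 1"
proof -
  have finite_V: "finite V" and edge_V: "\<And>x y. E x y \<Longrightarrow> y \<in> V" and "E\<^sup>*\<^sup>* u v"
    using G assms unfolding simple_connected_graph_def by (auto simp: subset_iff)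
  then obtain m t where walk: "successively E (u # m @ [t])"
    and m: "set m \<inter> (S - {u}) = {}" and t: "t \<in> S - {u}"
    using first_entry_walk_exists[of E u v "S - {u}"] assms by auto
  obtain ys zs where split: "u # m = ys @ u # zs" and "u \<notin> set zs"
    using split_list_last[of u "u # m"] by auto
  let ?xs = "u # zs @ [t]"
  have "set zs \<subseteq> set m"
    using split by (cases ys) auto
  moreover have "set (m @ [t]) \<subseteq> V"
    using successively_set_subset[OF edge_V walk] .
  ultimately have "?xs \<in> first_entry_paths V S u"
    using m t \<open>u \<notin> set zs\<close> assms(2,3) by (auto simp: first_entry_paths_iff)
  moreover have "walk_prob V E ?xs > 0"
  proof (rule walk_prob_pos[OF finite_V])
    show "successively E ?xs"
      using walk unfolding append_Cons[symmetric] split by (simp add: successively_append_iff)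
    show "set ?xs \<subseteq> V"
      using \<open>set zs \<subseteq> set m\<close> \<open>set (m @ [t]) \<subseteq> V\<close> assms(2,3) by auto
  qed
  ultimately have "event_prob V E {xs \<in> first_entry_paths V S u. last xs = t} > 0"
    using event_prob_ending_at_pos[OF finite_V] by fastforce
  moreover have "event_prob V E {xs \<in> first_entry_paths V S u. last xs = u} +
                   event_prob V E {xs \<in> first_entry_paths V S u. last xs = t} \<le> 1"
    using event_prob_ending_at_add_le_1[OF finite_V] t by auto
  ultimately show ?thesis
    by linarith
qed

theorem mainTheorem11:
  fixes V :: "'a set" and E :: "'a \<Rightarrow> 'a \<Rightarrow> bool" and S :: "'a set"
  assumes "simple_connected_graph V E"
    and "S \<subseteq> V" and "card S \<ge> 2"
  shows "(\<forall>u\<in>S. mat_mult V (shortcut_Q V E S) (R_mat E S) u u < 1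
                 \<and> mat_mult V (shortcut_Q V E S) (R_mat E S) u u
                     = event_prob V E {xs \<in> first_entry_paths V S u. last xs = u})
       \<and> (\<forall>u\<in>S. \<forall>v\<in>S. u \<noteq> v \<longrightarrow>
            schur_S V E S u v
              = mat_mult V (shortcut_Q V E S) (R_mat E S) u v
                / (1 - mat_mult V (shortcut_Q V E S) (R_mat E S) u u))"
proof -
  let ?QR = "mat_mult V (shortcut_Q V E S) (R_mat E S)"
  let ?p = "\<lambda>u v. event_prob V E {xs \<in> first_entry_paths V S u. last xs = v}"
  have finite_V: "finite V"
    using assms(1) by (simp add: simple_connected_graph_def)
  have QR: "?QR u v = ?p u v" if "u \<in> S" "v \<in> S" for u v
    by (rule shortcut_R_product[OF finite_V assms(2) that])
  have return: "?p u u < 1" if "u \<in> S" for u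
  proof -
    have "card (S - {u}) \<noteq> 0"
      using assms(3) that by (simp add: card_Diff_singleton)
    then obtain v where "v \<in> S" "v \<noteq> u"
      by (metis Diff_iff card.empty equals0I singletonI)
    then show ?thesis
      using return_prob_lt_1[OF assms(1,2) that] by auto
  qed
  have "schur_S V E S u v = ?p u v / (1 - ?p u u)" if "u \<in> S" "v \<in> S" "u \<noteq> v" for u v
    using schur_S_renewal[OF finite_V assms(2) that] return[OF that(1)]
    by (simp add: field_simps)
  then show ?thesis
    using QR return by simp
qed

end
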